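(* Let $V$ be a Whittaker module of type $\eta$ over $R$ with cyclic Whittaker vector $w$. If $Z_V=(p(\Omega))$ with $p\neq0$ a monic polynomial of degree $n$, then $\{F^iH^jw : 0\le i\le n-1,\ j\in\mathbb{Z}_{\ge0}\}$ is a $\mathbb{C}$-basis of $V$. If $Z_V=0$, then $\{F^iH^jw : i,j\in\mathbb{Z}_{\ge0}\}$ is a $\mathbb{C}$-basis of $V$.
   Context: Let $f\in\mathbb{C}[H]$ be a polynomial. $R=R(f)$ is the associative $\mathbb{C}$-algebra generated by $E,F,H$ with relations $EF-FE=f(H)$, $HE-EH=E$, $HF-FH=-F$. Let $u\in\mathbb{C}[H]$ satisfy $f(H)=\tfrac12(u(H+1)-u(H))$ and $\Omega=2FE+u(H+1)$; the center $Z(R)$ is the polynomial ring $\mathbb{C}[\Omega]$. Let $R(E)=\mathbb{C}[E]$ and fix an algebra homomorphism $\eta:R(E)\to\mathbb{C}$ with $\eta(E)\neq0$. A vector $v$ of an $R$-module $V$ is a Whittaker vector of type $\eta$ if $Ev=\eta(E)v$; $V$ is a Whittaker module of type $\eta$ with cyclic Whittaker vector $w$ if $w$ is a Whittaker vector and $V=Rw$. $Z_V=\mathrm{Ann}_R(V)\cap Z(R)$. *)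

theory Defs
  imports Main "HOL-Computational_Algebra.Polynomial"
begin

definition poly_op :: "(complex \<Rightarrow> 'v::ab_group_add \<Rightarrow> 'v) \<Rightarrow> ('v \<Rightarrow> 'v) \<Rightarrow> complex poly \<Rightarrow> 'v \<Rightarrow> 'v"
  where "poly_op sc T q v = (\<Sum>k\<le>degree q. sc (coeff q k) ((T ^^ k) v))"

definition R_module ::
  "(complex \<Rightarrow> 'v::ab_group_add \<Rightarrow> 'v) \<Rightarrow> complex poly \<Rightarrow> ('v \<Rightarrow> 'v) \<Rightarrow> ('v \<Rightarrow> 'v) \<Rightarrow> ('v \<Rightarrow> 'v) \<Rightarrow> bool"
  where "R_module sc f E F H \<longleftrightarrow>
     vector_space sc \<and>
     Vector_Spaces.linear sc sc E \<and> Vector_Spaces.linear sc sc F \<and> Vector_Spaces.linear sc sc H \<and>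
     (\<forall>v. E (F v) - F (E v) = poly_op sc H f v) \<and>
     (\<forall>v. H (E v) - E (H v) = E v) \<and>
     (\<forall>v. H (F v) - F (H v) = - F v)"

definition Omega_op ::
  "(complex \<Rightarrow> 'v::ab_group_add \<Rightarrow> 'v) \<Rightarrow> complex poly \<Rightarrow> ('v \<Rightarrow> 'v) \<Rightarrow> ('v \<Rightarrow> 'v) \<Rightarrow> ('v \<Rightarrow> 'v) \<Rightarrow> 'v \<Rightarrow> 'v"
  where "Omega_op sc u E F H v = sc 2 (F (E v)) + poly_op sc H (pcompose u [:1, 1:]) v"

definition gen_submodule ::
  "(complex \<Rightarrow> 'v::ab_group_add \<Rightarrow> 'v) \<Rightarrow> ('v \<Rightarrow> 'v) \<Rightarrow> ('v \<Rightarrow> 'v) \<Rightarrow> ('v \<Rightarrow> 'v) \<Rightarrow> 'v \<Rightarrow> 'v set"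
  where "gen_submodule sc E F H w =
    \<Inter>{S. module.subspace sc S \<and> w \<in> S \<and> E ` S \<subseteq> S \<and> F ` S \<subseteq> S \<and> H ` S \<subseteq> S}"

text \<open>Whittaker module of type \<eta> (with \<eta>(E) = c) and cyclic Whittaker vector w.\<close>
definition whittaker_module ::
  "(complex \<Rightarrow> 'v::ab_group_add \<Rightarrow> 'v) \<Rightarrow> complex poly \<Rightarrow> ('v \<Rightarrow> 'v) \<Rightarrow> ('v \<Rightarrow> 'v) \<Rightarrow> ('v \<Rightarrow> 'v) \<Rightarrow> complex \<Rightarrow> 'v \<Rightarrow> bool"
  where "whittaker_module sc f E F H c w \<longleftrightarrow>
     R_module sc f E F H \<and> E w = sc c w \<and> gen_submodule sc E F H w = UNIV"

text \<open>Z_V, identified (via Z(R) = C[\<Omega>] polynomial ring) with the ideal of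
polynomials q such that q(\<Omega>) annihilates V.\<close>
definition Z_V ::
  "(complex \<Rightarrow> 'v::ab_group_add \<Rightarrow> 'v) \<Rightarrow> complex poly \<Rightarrow> ('v \<Rightarrow> 'v) \<Rightarrow> ('v \<Rightarrow> 'v) \<Rightarrow> ('v \<Rightarrow> 'v) \<Rightarrow> complex poly set"
  where "Z_V sc u E F H = {q. \<forall>v. poly_op sc (Omega_op sc u E F H) q v = 0}"

definition is_basis_family :: "(complex \<Rightarrow> 'v::ab_group_add \<Rightarrow> 'v) \<Rightarrow> ('i \<Rightarrow> 'v) \<Rightarrow> 'i set \<Rightarrow> bool"
  where "is_basis_family sc b I \<longleftrightarrow>
     inj_on b I \<and> \<not> module.dependent sc (b ` I) \<and> module.span sc (b ` I) = UNIV"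

end

theory Submission
  imports Defs
begin

text \<open>
  The Casimir operator \<Omega> commutes with E, F and H, and on the Whittaker vector
  2c F w = \<Omega> w - u(H+1) w. Let Y_m be the span of the H^j \<Omega>^k w with k < m.
  By induction on i, F^i g(H) w \<equiv> (2c)^(-i) g(H+i) \<Omega>^i w modulo Y_i; hence the F^i H^j w
  with i < m span Y_m, and V is the union of the Y_m. If p(\<Omega>) = 0 with p monic of degree n,
  then every Y_m lies in Y_n, which gives spanning.
  For independence, E g(H) \<Omega>^k w = c g(H-1) \<Omega>^k w, so E/c - 1 lowers the H-degrees in a
  relation \<Sum>_{k<K} G_k(H) \<Omega>^k w = 0; iterating, one reaches a nonzero q of degree < K with
  q(\<Omega>) w = 0, i.e. q \<in> Z_V. By the congruence above, a nontrivial relation among the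
  F^i H^j w with i < n leads to such a q with K \<le> n, which is impossible both when
  Z_V = (p(\<Omega>)) with deg p = n and when Z_V = 0.
\<close>

lemma funpow_commute: "(\<And>v. S (T v) = T (S v)) \<Longrightarrow> S ((T ^^ k) v) = (T ^^ k) (S v)"
  by (induct k) simp_all

lemma pcompose_shift_cancel:
  fixes h :: "'a::comm_ring_1 poly"
  shows "pcompose (pcompose h [:- a, 1:]) [:a, 1:] = h"
  by (simp add: pcompose_assoc[symmetric] pcompose_pCons)

lemma pcompose_shift_add:
  fixes g :: "'a::comm_ring_1 poly"
  shows "pcompose (pcompose g [:a, 1:]) [:b, 1:] = pcompose g [:a + b, 1:]"
  by (simp add: pcompose_assoc[symmetric] pcompose_pCons add.commute)

lemma degree_pcompose_shift_diff_le:
  fixes g :: "'a::idom poly"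
  assumes "degree g \<le> Suc d"
  shows "degree (pcompose g [:-1, 1:] - g) \<le> d"
proof (rule degree_le, intro allI impI)
  fix i assume i: "d < i"
  have degree_eq: "degree (pcompose g [:-1, 1:]) = degree g"
    by (simp add: degree_pcompose)
  show "coeff (pcompose g [:-1, 1:] - g) i = 0"
  proof (cases "i = degree g")
    case True
    have "lead_coeff (pcompose g [:-1, 1:]) = lead_coeff g"
      by (subst lead_coeff_comp) simp_all
    then show ?thesis using True degree_eq by simp
  next
    case False
    then have "degree g < i" using i assms by simp
    then show ?thesis using degree_eq by (simp add: coeff_eq_0)
  qed
qed

lemma pcompose_shift_diff_nonzero:
  fixes g :: "'a::{idom, ring_char_0} poly"
  assumes "0 < degree g"
  shows "pcompose g [:-1, 1:] - g \<noteq> 0"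
proof
  assume "pcompose g [:-1, 1:] - g = 0"
  then have "poly (pcompose g [:-1, 1:]) x = poly g x" for x
    by simp
  then have step: "poly g (x - 1) = poly g x" for x
    by (simp add: poly_pcompose)
  have "poly g (- of_nat k) = poly g 0" for k
  proof (induct k)
    case (Suc k)
    have "(- of_nat (Suc k) :: 'a) = - of_nat k - 1"
      by simp
    then have "poly g (- of_nat (Suc k)) = poly g (- of_nat k - 1)"
      by (rule arg_cong)
    with step Suc show ?case by simp
  qed simp
  then have "range (\<lambda>k. - of_nat k) \<subseteq> {x. poly (g - [:poly g 0:]) x = 0}"
    by auto
  moreover have "infinite (range (\<lambda>k::nat. - (of_nat k :: 'a)))"
    by (rule range_inj_infinite) (auto simp: inj_def)
  ultimately have "g - [:poly g 0:] = 0"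
    using infinite_super poly_roots_finite by blast
  then have "degree g = 0"
    by (metis degree_pCons_0 eq_iff_diff_eq_0)
  with assms show False by simp
qed

context module
begin

lemma inj_on_independent_imageI:
  assumes trivial: "\<And>J a. finite J \<Longrightarrow> J \<subseteq> I \<Longrightarrow> (\<Sum>x\<in>J. scale (a x) (b x)) = 0 \<Longrightarrow> \<forall>x\<in>J. a x = 0"
  shows "inj_on b I \<and> independent (b ` I)"
proof
  show inj: "inj_on b I"
  proof (rule inj_onI, rule ccontr)
    fix x y assume xy: "x \<in> I" "y \<in> I" "b x = b y" "x \<noteq> y"
    let ?a = "\<lambda>z. if z = x then 1 else -1"
    have "(\<Sum>z\<in>{x, y}. scale (?a z) (b z)) = 0" using xy by simp
    from trivial[OF _ _ this] xy show False by auto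
  qed
  show "independent (b ` I)"
  proof
    assume "dependent (b ` I)"
    then obtain T U where T: "finite T" "T \<subseteq> b ` I" "(\<Sum>v\<in>T. scale (U v) v) = 0" "\<exists>v\<in>T. U v \<noteq> 0"
      unfolding dependent_explicit by blast
    from finite_subset_image[OF T(1) T(2)] obtain C where C: "C \<subseteq> I" "finite C" "T = b ` C"
      by blast
    have "(\<Sum>x\<in>C. scale (U (b x)) (b x)) = 0"
      using T(3) unfolding C(3) sum.reindex[OF inj_on_subset[OF inj C(1)]] by simp
    from trivial[OF C(2) C(1) this] T(4) C(3) show False by auto
  qed
qed

end

locale complex_vector_space = vector_space sc + vector_space_pair sc sc
  for sc :: "complex \<Rightarrow> 'v::ab_group_add \<Rightarrow> 'v"
begin

lemma linear_funpow: "Vector_Spaces.linear sc sc T \<Longrightarrow> Vector_Spaces.linear sc sc (T ^^ k)"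
  by (induct k) (auto intro: linear_id Vector_Spaces.linear_compose)

lemma poly_op_eq_sum_lessThan:
  assumes "degree q < N"
  shows "poly_op sc T q v = (\<Sum>k<N. sc (coeff q k) ((T ^^ k) v))"
proof -
  have "(\<Sum>k<N. sc (coeff q k) ((T ^^ k) v)) = (\<Sum>k\<le>degree q. sc (coeff q k) ((T ^^ k) v))"
    by (rule sum.mono_neutral_right) (use assms in \<open>auto simp: coeff_eq_0\<close>)
  then show ?thesis by (simp add: poly_op_def)
qed

lemma poly_op_0 [simp]: "poly_op sc T 0 v = 0"
  by (simp add: poly_op_def)

lemma poly_op_const [simp]: "poly_op sc T [:a:] v = sc a v"
  by (simp add: poly_op_def)

lemma poly_op_1 [simp]: "poly_op sc T 1 v = v"
  by (simp add: poly_op_def)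

lemma poly_op_add: "poly_op sc T (p + q) v = poly_op sc T p v + poly_op sc T q v"
proof -
  define N where "N = Suc (degree p + degree q)"
  have "degree p < N" "degree q < N" "degree (p + q) < N"
    using degree_add_le_max[of p q] by (auto simp: N_def)
  then show ?thesis
    by (simp add: poly_op_eq_sum_lessThan[where N=N] scale_left_distrib sum.distrib)
qed

lemma poly_op_smult: "poly_op sc T (smult a p) v = sc a (poly_op sc T p v)"
proof -
  define N where "N = Suc (degree p)"
  have "degree p < N" "degree (smult a p) < N"
    using degree_smult_le[of a p] by (auto simp: N_def)
  then show ?thesis
    by (simp add: poly_op_eq_sum_lessThan[where N=N] scale_sum_right)
qed

lemma poly_op_diff: "poly_op sc T (p - q) v = poly_op sc T p v - poly_op sc T q v"
  using poly_op_add[of T "p - q" q v] by (simp add: eq_diff_eq)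

lemma poly_op_sum: "poly_op sc T (\<Sum>i\<in>A. p i) v = (\<Sum>i\<in>A. poly_op sc T (p i) v)"
  by (induct A rule: infinite_finite_induct) (simp_all add: poly_op_add)

lemma poly_op_monom: "poly_op sc T (monom a k) v = sc a ((T ^^ k) v)"
proof -
  have "degree (monom a k) < Suc k"
    using degree_monom_le[of a k] by simp
  then show ?thesis
    by (simp add: poly_op_eq_sum_lessThan sum.delta)
qed

context
  fixes T :: "'v \<Rightarrow> 'v"
  assumes linear_T: "Vector_Spaces.linear sc sc T"
begin

lemma poly_op_pCons: "poly_op sc T (pCons a p) v = sc a v + T (poly_op sc T p v)"
proof -
  define N where "N = Suc (degree p)"
  have degree_p: "degree p < N"
    by (simp add: N_def)
  have "degree (pCons a p) < Suc N"
    using degree_pCons_le[of a p] by (simp add: N_def)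
  then have "poly_op sc T (pCons a p) v = (\<Sum>k<Suc N. sc (coeff (pCons a p) k) ((T ^^ k) v))"
    by (rule poly_op_eq_sum_lessThan)
  also have "\<dots> = sc a v + (\<Sum>k<N. sc (coeff p k) ((T ^^ Suc k) v))"
    unfolding sum.lessThan_Suc_shift by simp
  also have "(\<Sum>k<N. sc (coeff p k) ((T ^^ Suc k) v)) = T (poly_op sc T p v)"
    by (simp add: poly_op_eq_sum_lessThan[OF degree_p] linear_sum[OF linear_T] linear_scale[OF linear_T])
  finally show ?thesis .
qed

lemma linear_poly_op: "Vector_Spaces.linear sc sc (poly_op sc T p)"
proof -
  have "poly_op sc T p = (\<lambda>v. \<Sum>k<Suc (degree p). sc (coeff p k) ((T ^^ k) v))"
    by (rule ext, rule poly_op_eq_sum_lessThan) simp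
  moreover have "Vector_Spaces.linear sc sc (\<lambda>v. \<Sum>k<Suc (degree p). sc (coeff p k) ((T ^^ k) v))"
    by (intro linear_compose_sum ballI linear_compose_scale_right linear_funpow linear_T)
  ultimately show ?thesis
    by simp
qed

lemma poly_op_mult: "poly_op sc T (p * q) v = poly_op sc T p (poly_op sc T q v)"
  by (induct p) (simp_all add: poly_op_add poly_op_smult poly_op_pCons)

lemma poly_op_intertwine:
  assumes linear_S: "Vector_Spaces.linear sc sc S"
    and S_T: "\<And>v. S (T v) = T (S v) + sc a (S v)"
  shows "S (poly_op sc T g v) = poly_op sc T (pcompose g [:a, 1:]) (S v)"
proof (induct g arbitrary: v)
  case (pCons b g)
  have "S (poly_op sc T (pCons b g) v) = sc b (S v) + S (T (poly_op sc T g v))"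
    by (simp add: poly_op_pCons linear_add[OF linear_S] linear_scale[OF linear_S])
  also have "\<dots> = sc b (S v) + T (poly_op sc T (pcompose g [:a, 1:]) (S v))
       + sc a (poly_op sc T (pcompose g [:a, 1:]) (S v))"
    by (simp add: S_T pCons add.assoc)
  also have "\<dots> = poly_op sc T (pcompose (pCons b g) [:a, 1:]) (S v)"
    by (simp add: pcompose_pCons poly_op_add poly_op_mult poly_op_pCons poly_op_smult algebra_simps)
  finally show ?case .
qed (simp add: linear_0[OF linear_S])

lemma poly_op_commute:
  assumes "Vector_Spaces.linear sc sc S" and "\<And>v. S (T v) = T (S v)"
  shows "S (poly_op sc T g v) = poly_op sc T g (S v)"
  using poly_op_intertwine[OF assms(1), of 0 g v] assms(2) by simp

end

end

locale whittaker =
  fixes sc :: "complex \<Rightarrow> 'v::ab_group_add \<Rightarrow> 'v"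
    and f u :: "complex poly"
    and E F H :: "'v \<Rightarrow> 'v"
    and c :: complex and w :: 'v
  assumes f_eq: "f = smult (1/2) (pcompose u [:1, 1:] - u)"
    and c_nonzero: "c \<noteq> 0"
    and is_whittaker: "whittaker_module sc f E F H c w"
begin

sublocale complex_vector_space sc
  using is_whittaker
  by (simp add: whittaker_module_def R_module_def complex_vector_space_def vector_space_pair_def)

abbreviation polyH :: "complex poly \<Rightarrow> 'v \<Rightarrow> 'v"
  where "polyH g \<equiv> poly_op sc H g"

abbreviation \<Omega> :: "'v \<Rightarrow> 'v"
  where "\<Omega> \<equiv> Omega_op sc u E F H"

abbreviation poly\<Omega> :: "complex poly \<Rightarrow> 'v \<Rightarrow> 'v"
  where "poly\<Omega> q \<equiv> poly_op sc \<Omega> q"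

lemma linear_E: "Vector_Spaces.linear sc sc E"
  and linear_F: "Vector_Spaces.linear sc sc F"
  and linear_H: "Vector_Spaces.linear sc sc H"
  and E_w: "E w = sc c w"
  using is_whittaker by (simp_all add: whittaker_module_def R_module_def)

lemma E_F: "E (F v) = F (E v) + polyH f v"
  using is_whittaker by (simp add: whittaker_module_def R_module_def diff_eq_eq add.commute)

lemma E_H: "E (H v) = H (E v) + sc (-1) (E v)"
  using is_whittaker by (simp add: whittaker_module_def R_module_def diff_eq_eq algebra_simps)

lemma F_H: "F (H v) = H (F v) + sc 1 (F v)"
  using is_whittaker by (simp add: whittaker_module_def R_module_def diff_eq_eq algebra_simps)

lemma invariant_subspace_eq_UNIV:
  assumes "subspace S" "w \<in> S" "E ` S \<subseteq> S" "F ` S \<subseteq> S" "H ` S \<subseteq> S"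
  shows "S = UNIV"
proof -
  have "gen_submodule sc E F H w \<subseteq> S"
    unfolding gen_submodule_def using assms by blast
  then show ?thesis
    using is_whittaker by (auto simp: whittaker_module_def)
qed

lemma linear_polyH: "Vector_Spaces.linear sc sc (polyH g)"
  by (rule linear_poly_op[OF linear_H])

lemma E_polyH: "E (polyH g v) = polyH (pcompose g [:-1, 1:]) (E v)"
  by (rule poly_op_intertwine[OF linear_H linear_E E_H])

lemma F_polyH: "F (polyH g v) = polyH (pcompose g [:1, 1:]) (F v)"
  by (rule poly_op_intertwine[OF linear_H linear_F F_H])

lemma H_polyH: "H (polyH g v) = polyH g (H v)"
  by (rule poly_op_commute[OF linear_H linear_H]) simp

lemma \<Omega>_eq: "\<Omega> v = sc 2 (F (E v)) + polyH (pcompose u [:1, 1:]) v"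
  by (simp add: Omega_op_def)

lemma linear_\<Omega>: "Vector_Spaces.linear sc sc \<Omega>"
  unfolding Omega_op_def[abs_def]
  by (intro linear_compose_add linear_compose_scale_right linear_polyH
      Vector_Spaces.linear_compose[OF linear_E linear_F, unfolded comp_def])

lemma \<Omega>_H: "\<Omega> (H v) = H (\<Omega> v)"
proof -
  have "F (E (H v)) = H (F (E v))"
    by (simp add: E_H F_H linear_add[OF linear_F] linear_diff[OF linear_F] linear_scale[OF linear_F])
  then show ?thesis
    by (simp add: \<Omega>_eq H_polyH linear_add[OF linear_H] linear_scale[OF linear_H])
qed

lemma smult_2_f_plus_u: "smult 2 f + u = pcompose u [:1, 1:]"
  by (simp add: f_eq smult_diff_right)

lemma \<Omega>_F: "\<Omega> (F v) = F (\<Omega> v)"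
proof -
  have "\<Omega> (F v) = sc 2 (F (F (E v))) + sc 2 (F (polyH f v)) + F (polyH u v)"
    by (simp add: \<Omega>_eq E_F F_polyH scale_right_distrib linear_add[OF linear_F])
  also have "\<dots> = F (sc 2 (F (E v)) + polyH (smult 2 f + u) v)"
    by (simp add: linear_add[OF linear_F] linear_scale[OF linear_F] poly_op_add poly_op_smult add.assoc)
  also have "\<dots> = F (\<Omega> v)"
    by (simp add: smult_2_f_plus_u \<Omega>_eq)
  finally show ?thesis .
qed

lemma \<Omega>_E: "\<Omega> (E v) = E (\<Omega> v)"
proof -
  have "E (\<Omega> v) = sc 2 (F (E (E v))) + sc 2 (polyH f (E v)) + polyH u (E v)"
    by (simp add: \<Omega>_eq E_F E_polyH pcompose_shift_add linear_add[OF linear_E] linear_scale[OF linear_E]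
        scale_right_distrib)
  also have "\<dots> = sc 2 (F (E (E v))) + polyH (smult 2 f + u) (E v)"
    by (simp add: poly_op_add poly_op_smult add.assoc)
  also have "\<dots> = \<Omega> (E v)"
    by (simp add: smult_2_f_plus_u \<Omega>_eq)
  finally show ?thesis by simp
qed

lemma \<Omega>_polyH: "\<Omega> (polyH g v) = polyH g (\<Omega> v)"
  by (rule poly_op_commute[OF linear_H linear_\<Omega> \<Omega>_H])

lemma polyH_\<Omega>_pow: "polyH g ((\<Omega> ^^ k) v) = (\<Omega> ^^ k) (polyH g v)"
  by (rule funpow_commute) (rule \<Omega>_polyH[symmetric])

lemma E_\<Omega>_pow_w: "E ((\<Omega> ^^ k) w) = sc c ((\<Omega> ^^ k) w)"
  by (simp add: funpow_commute[of E \<Omega>, OF \<Omega>_E[symmetric]] E_w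
      linear_scale[OF linear_funpow[OF linear_\<Omega>]])

lemma F_w: "F w = sc (inverse (2 * c)) (\<Omega> w - polyH (pcompose u [:1, 1:]) w)"
proof -
  have "\<Omega> w - polyH (pcompose u [:1, 1:]) w = sc (2 * c) (F w)"
    by (simp add: \<Omega>_eq E_w linear_scale[OF linear_F])
  then show ?thesis
    using c_nonzero by simp
qed

text \<open>\<open>q(\<Omega>)\<close> is central, so it kills \<open>V\<close> as soon as it kills the generator \<open>w\<close>.\<close>
lemma Z_V_iff: "q \<in> Z_V sc u E F H \<longleftrightarrow> poly\<Omega> q w = 0"
proof
  assume q_w: "poly\<Omega> q w = 0"
  let ?S = "{v. poly\<Omega> q v = 0}"
  have linear_q: "Vector_Spaces.linear sc sc (poly\<Omega> q)"
    by (rule linear_poly_op[OF linear_\<Omega>])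
  have "?S = UNIV"
  proof (rule invariant_subspace_eq_UNIV)
    show "subspace ?S"
      by (rule linear_subspace_kernel[OF linear_q])
    show "E ` ?S \<subseteq> ?S" "F ` ?S \<subseteq> ?S" "H ` ?S \<subseteq> ?S"
      using poly_op_commute[OF linear_\<Omega> linear_E \<Omega>_E[symmetric], symmetric]
        poly_op_commute[OF linear_\<Omega> linear_F \<Omega>_F[symmetric], symmetric]
        poly_op_commute[OF linear_\<Omega> linear_H \<Omega>_H[symmetric], symmetric]
        linear_0[OF linear_E] linear_0[OF linear_F] linear_0[OF linear_H]
      by auto
  qed (use q_w in simp)
  then show "q \<in> Z_V sc u E F H"
    by (auto simp: Z_V_def)
qed (simp add: Z_V_def)

definition omega_span :: "nat \<Rightarrow> 'v set"
  where "omega_span m = range (\<lambda>G. \<Sum>k<m. polyH (G k) ((\<Omega> ^^ k) w))"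

lemma omega_span_0 [simp]: "omega_span 0 = {0}"
  by (simp add: omega_span_def)

lemma subspace_omega_span: "subspace (omega_span m)"
proof (rule subspaceI)
  show "0 \<in> omega_span m"
    using rangeI[of "\<lambda>G. \<Sum>k<m. polyH (G k) ((\<Omega> ^^ k) w)" "\<lambda>_. 0"] by (simp add: omega_span_def)
next
  fix x y assume "x \<in> omega_span m" "y \<in> omega_span m"
  then obtain G1 G2 where "x = (\<Sum>k<m. polyH (G1 k) ((\<Omega> ^^ k) w))" "y = (\<Sum>k<m. polyH (G2 k) ((\<Omega> ^^ k) w))"
    by (auto simp: omega_span_def)
  then have "x + y = (\<Sum>k<m. polyH (G1 k + G2 k) ((\<Omega> ^^ k) w))"
    by (simp add: poly_op_add sum.distrib)
  then show "x + y \<in> omega_span m"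
    by (simp add: omega_span_def)
next
  fix a x assume "x \<in> omega_span m"
  then obtain G where "x = (\<Sum>k<m. polyH (G k) ((\<Omega> ^^ k) w))"
    by (auto simp: omega_span_def)
  then have "sc a x = (\<Sum>k<m. polyH (smult a (G k)) ((\<Omega> ^^ k) w))"
    by (simp add: poly_op_smult scale_sum_right)
  then show "sc a x \<in> omega_span m"
    by (simp add: omega_span_def)
qed

lemma polyH_mem_omega_span: "k < m \<Longrightarrow> polyH h ((\<Omega> ^^ k) w) \<in> omega_span m"
proof -
  assume "k < m"
  then have "polyH h ((\<Omega> ^^ k) w) = (\<Sum>j<m. polyH (if j = k then h else 0) ((\<Omega> ^^ j) w))"
    by (simp add: if_distrib[of "\<lambda>g. polyH g _"] sum.delta cong: if_cong)
  then show ?thesis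
    by (simp add: omega_span_def)
qed

lemma omega_span_subsetI:
  assumes "\<And>h k. k < m \<Longrightarrow> polyH h ((\<Omega> ^^ k) w) \<in> S" and "subspace S"
  shows "omega_span m \<subseteq> S"
  using assms by (auto simp: omega_span_def intro: subspace_sum)

lemma omega_span_mono: "m \<le> m' \<Longrightarrow> omega_span m \<subseteq> omega_span m'"
  by (intro omega_span_subsetI subspace_omega_span polyH_mem_omega_span) simp

lemma linear_image_omega_span:
  assumes "Vector_Spaces.linear sc sc T"
    and "\<And>h k. k < m \<Longrightarrow> T (polyH h ((\<Omega> ^^ k) w)) \<in> omega_span m'"
  shows "T ` omega_span m \<subseteq> omega_span m'"
  using assms omega_span_subsetI[of m "T -` omega_span m'"]
  by (auto intro: linear_subspace_vimage subspace_omega_span)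

lemma \<Omega>_image_omega_span: "\<Omega> ` omega_span m \<subseteq> omega_span (Suc m)"
proof (rule linear_image_omega_span[OF linear_\<Omega>])
  fix h k assume "k < m"
  then show "\<Omega> (polyH h ((\<Omega> ^^ k) w)) \<in> omega_span (Suc m)"
    using polyH_mem_omega_span[of "Suc k" "Suc m" h] by (simp add: \<Omega>_polyH)
qed

lemma E_image_omega_span: "E ` omega_span m \<subseteq> omega_span m"
proof (rule linear_image_omega_span[OF linear_E])
  fix h k assume "k < m"
  have "E (polyH h ((\<Omega> ^^ k) w)) = sc c (polyH (pcompose h [:-1, 1:]) ((\<Omega> ^^ k) w))"
    by (simp add: E_polyH E_\<Omega>_pow_w linear_scale[OF linear_polyH])
  with \<open>k < m\<close> show "E (polyH h ((\<Omega> ^^ k) w)) \<in> omega_span m"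
    by (simp add: polyH_mem_omega_span subspace_scale[OF subspace_omega_span])
qed

lemma H_image_omega_span: "H ` omega_span m \<subseteq> omega_span m"
proof (rule linear_image_omega_span[OF linear_H])
  fix h k assume "k < m"
  have "H (polyH h ((\<Omega> ^^ k) w)) = polyH ([:0, 1:] * h) ((\<Omega> ^^ k) w)"
    by (simp add: poly_op_pCons[OF linear_H])
  with \<open>k < m\<close> show "H (polyH h ((\<Omega> ^^ k) w)) \<in> omega_span m"
    by (simp add: polyH_mem_omega_span)
qed

lemma F_polyH_\<Omega>_pow_w:
  "F (polyH h ((\<Omega> ^^ k) w)) = sc (inverse (2 * c))
     (polyH (pcompose h [:1, 1:]) ((\<Omega> ^^ Suc k) w)
      - polyH (pcompose h [:1, 1:] * pcompose u [:1, 1:]) ((\<Omega> ^^ k) w))"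
proof -
  have linear_pow: "Vector_Spaces.linear sc sc (\<Omega> ^^ k)"
    by (rule linear_funpow[OF linear_\<Omega>])
  have "F (polyH h ((\<Omega> ^^ k) w)) = polyH (pcompose h [:1, 1:]) ((\<Omega> ^^ k) (F w))"
    by (simp add: F_polyH funpow_commute[of F \<Omega>, OF \<Omega>_F[symmetric]])
  also have "\<dots> = sc (inverse (2 * c)) (polyH (pcompose h [:1, 1:]) ((\<Omega> ^^ k) (\<Omega> w))
      - polyH (pcompose h [:1, 1:]) ((\<Omega> ^^ k) (polyH (pcompose u [:1, 1:]) w)))"
    by (simp add: F_w linear_scale[OF linear_pow] linear_diff[OF linear_pow]
        linear_scale[OF linear_polyH] linear_diff[OF linear_polyH])
  also have "(\<Omega> ^^ k) (\<Omega> w) = (\<Omega> ^^ Suc k) w"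
    by (simp add: funpow_swap1)
  also have "polyH (pcompose h [:1, 1:]) ((\<Omega> ^^ k) (polyH (pcompose u [:1, 1:]) w))
      = polyH (pcompose h [:1, 1:] * pcompose u [:1, 1:]) ((\<Omega> ^^ k) w)"
    by (simp add: poly_op_mult[OF linear_H] polyH_\<Omega>_pow)
  finally show ?thesis .
qed

lemma F_image_omega_span: "F ` omega_span m \<subseteq> omega_span (Suc m)"
proof (rule linear_image_omega_span[OF linear_F])
  fix h k assume "k < m"
  then show "F (polyH h ((\<Omega> ^^ k) w)) \<in> omega_span (Suc m)"
    unfolding F_polyH_\<Omega>_pow_w
    by (intro subspace_scale[OF subspace_omega_span] subspace_diff[OF subspace_omega_span]
        polyH_mem_omega_span) simp_all
qed

lemma UN_omega_span_eq_UNIV: "(\<Union>m. omega_span m) = UNIV" (is "?S = UNIV")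
proof (rule invariant_subspace_eq_UNIV)
  have invariant: "T ` ?S \<subseteq> ?S" if "\<And>m. T ` omega_span m \<subseteq> omega_span (Suc m)" for T
    using that unfolding image_UN by blast
  show "subspace ?S"
  proof (rule subspaceI)
    show "0 \<in> ?S"
      using subspace_0[OF subspace_omega_span] by blast
  next
    fix x y assume "x \<in> ?S" "y \<in> ?S"
    then obtain a b where "x \<in> omega_span a" "y \<in> omega_span b"
      by blast
    then have "x \<in> omega_span (max a b)" "y \<in> omega_span (max a b)"
      using omega_span_mono[of a "max a b"] omega_span_mono[of b "max a b"] by auto
    then show "x + y \<in> ?S"
      using subspace_add[OF subspace_omega_span] by blast
  next
    fix a x assume "x \<in> ?S"
    then show "sc a x \<in> ?S"
      using subspace_scale[OF subspace_omega_span] by blast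
  qed
  have "w \<in> omega_span 1"
    using polyH_mem_omega_span[of 0 1 1] by simp
  then show "w \<in> ?S"
    by (rule UN_I[OF UNIV_I])
  show "E ` ?S \<subseteq> ?S"
    by (rule invariant, rule order_trans[OF E_image_omega_span omega_span_mono]) simp
  show "H ` ?S \<subseteq> ?S"
    by (rule invariant, rule order_trans[OF H_image_omega_span omega_span_mono]) simp
  show "F ` ?S \<subseteq> ?S"
    using F_image_omega_span by (rule invariant)
qed

lemma F_pow_polyH_w_leading:
  "(F ^^ i) (polyH g w) - sc (inverse ((2 * c) ^ i)) (polyH (pcompose g [:of_nat i, 1:]) ((\<Omega> ^^ i) w))
     \<in> omega_span i"
proof (induct i arbitrary: g)
  case (Suc i)
  define g1 where "g1 = pcompose g [:1, 1:]"
  define a where "a = inverse ((2 * c) ^ i)"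
  define y1 where "y1 = (F ^^ i) (polyH g1 w) - sc a (polyH (pcompose g1 [:of_nat i, 1:]) ((\<Omega> ^^ i) w))"
  define y2 where "y2 = (F ^^ i) (polyH (g1 * pcompose u [:1, 1:]) w)"
  have linear_F_pow: "Vector_Spaces.linear sc sc (F ^^ i)"
    by (rule linear_funpow[OF linear_F])
  have y1: "y1 \<in> omega_span i"
    using Suc[of g1] by (simp add: y1_def a_def)
  have y2: "y2 \<in> omega_span (Suc i)"
  proof -
    let ?lead = "sc a (polyH (pcompose (g1 * pcompose u [:1, 1:]) [:of_nat i, 1:]) ((\<Omega> ^^ i) w))"
    have "y2 - ?lead \<in> omega_span (Suc i)"
      using Suc[of "g1 * pcompose u [:1, 1:]"] omega_span_mono[of i "Suc i"] by (auto simp: y2_def a_def)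
    moreover have "?lead \<in> omega_span (Suc i)"
      by (intro subspace_scale[OF subspace_omega_span] polyH_mem_omega_span) simp
    ultimately show ?thesis
      using subspace_add[OF subspace_omega_span] by fastforce
  qed
  have g1_shift: "pcompose g1 [:of_nat i, 1:] = pcompose g [:of_nat (Suc i), 1:]"
    by (simp add: g1_def pcompose_shift_add)
  have "(F ^^ Suc i) (polyH g w) = (F ^^ i) (polyH g1 (F w))"
    by (simp only: funpow_Suc_right comp_def g1_def F_polyH)
  also have "\<dots> = sc (inverse (2 * c)) (\<Omega> ((F ^^ i) (polyH g1 w)) - y2)"
    by (simp add: F_w y2_def linear_scale[OF linear_polyH] linear_diff[OF linear_polyH]
        linear_scale[OF linear_F_pow] linear_diff[OF linear_F_pow] poly_op_mult[OF linear_H]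
        \<Omega>_polyH[symmetric] funpow_commute[of \<Omega> F, OF \<Omega>_F, symmetric])
  also have "(F ^^ i) (polyH g1 w) = y1 + sc a (polyH (pcompose g [:of_nat (Suc i), 1:]) ((\<Omega> ^^ i) w))"
    by (simp add: y1_def g1_shift)
  also have "\<Omega> \<dots> = \<Omega> y1 + sc a (polyH (pcompose g [:of_nat (Suc i), 1:]) ((\<Omega> ^^ Suc i) w))"
    by (simp add: linear_add[OF linear_\<Omega>] linear_scale[OF linear_\<Omega>] \<Omega>_polyH)
  finally have "(F ^^ Suc i) (polyH g w)
      - sc (inverse ((2 * c) ^ Suc i)) (polyH (pcompose g [:of_nat (Suc i), 1:]) ((\<Omega> ^^ Suc i) w))
      = sc (inverse (2 * c)) (\<Omega> y1 - y2)"
    by (simp add: a_def algebra_simps)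
  then show ?case
    using \<Omega>_image_omega_span y1 y2
    by (auto intro!: subspace_scale[OF subspace_omega_span] subspace_diff[OF subspace_omega_span])
qed simp

lemma F_pow_polyH_w_mem_omega_span: "(F ^^ i) (polyH g w) \<in> omega_span (Suc i)"
proof -
  let ?lead = "sc (inverse ((2 * c) ^ i)) (polyH (pcompose g [:of_nat i, 1:]) ((\<Omega> ^^ i) w))"
  have "(F ^^ i) (polyH g w) - ?lead \<in> omega_span (Suc i)"
    using F_pow_polyH_w_leading[of i g] omega_span_mono[of i "Suc i"] by auto
  moreover have "?lead \<in> omega_span (Suc i)"
    by (intro subspace_scale[OF subspace_omega_span] polyH_mem_omega_span) simp
  ultimately show ?thesis
    using subspace_add[OF subspace_omega_span] by fastforce
qed

definition FH_vector :: "nat \<times> nat \<Rightarrow> 'v"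
  where "FH_vector = (\<lambda>(i, j). (F ^^ i) ((H ^^ j) w))"

lemma F_pow_polyH_w_eq: "(F ^^ i) (polyH g w) = (\<Sum>j\<le>degree g. sc (coeff g j) (FH_vector (i, j)))"
proof -
  have "Vector_Spaces.linear sc sc (F ^^ i)"
    by (rule linear_funpow[OF linear_F])
  then show ?thesis
    by (simp add: poly_op_def linear_sum linear_scale FH_vector_def)
qed

lemma F_pow_polyH_w_mem_span: "i < m \<Longrightarrow> (F ^^ i) (polyH g w) \<in> span (FH_vector ` ({..<m} \<times> UNIV))"
  unfolding F_pow_polyH_w_eq by (intro span_sum span_scale span_base) auto

lemma omega_span_subset_span_FH_vector: "omega_span m \<subseteq> span (FH_vector ` ({..<m} \<times> UNIV))"
proof (induct m)
  case (Suc m)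
  let ?X = "span (FH_vector ` ({..<Suc m} \<times> UNIV))"
  have "span (FH_vector ` ({..<m} \<times> UNIV)) \<subseteq> ?X"
    by (intro span_mono image_mono) auto
  with Suc have lower: "omega_span m \<subseteq> ?X"
    by blast
  show ?case
  proof (rule omega_span_subsetI[OF _ subspace_span])
    fix h k assume "k < Suc m"
    show "polyH h ((\<Omega> ^^ k) w) \<in> ?X"
    proof (cases "k < m")
      case True
      then show ?thesis
        using lower polyH_mem_omega_span by blast
    next
      case False
      with \<open>k < Suc m\<close> have "k = m"
        by simp
      define g where "g = pcompose h [:- of_nat m, 1:]"
      define t where "t = (F ^^ m) (polyH g w) - sc (inverse ((2 * c) ^ m)) (polyH h ((\<Omega> ^^ m) w))"
      have "t \<in> ?X"
        using F_pow_polyH_w_leading[of m g] lower by (auto simp: t_def g_def pcompose_shift_cancel)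
      moreover have "(F ^^ m) (polyH g w) \<in> ?X"
        by (rule F_pow_polyH_w_mem_span) simp
      moreover have "polyH h ((\<Omega> ^^ m) w) = sc ((2 * c) ^ m) ((F ^^ m) (polyH g w) - t)"
        using c_nonzero by (simp add: t_def field_simps)
      ultimately show ?thesis
        using \<open>k = m\<close> by (simp add: span_scale span_diff)
    qed
  qed
qed (simp add: span_zero)

lemma omega_span_subset_if_annihilated:
  assumes monic: "lead_coeff p = 1" and annihilates: "\<And>v. poly\<Omega> p v = 0"
  shows "omega_span m \<subseteq> omega_span (degree p)"
proof (rule omega_span_subsetI[OF _ subspace_omega_span])
  fix h k
  show "polyH h ((\<Omega> ^^ k) w) \<in> omega_span (degree p)"
  proof (induct k arbitrary: h rule: less_induct)
    case (less k)
    show ?case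
    proof (cases "k < degree p")
      case True
      then show ?thesis
        by (rule polyH_mem_omega_span)
    next
      case False
      define x where "x = polyH h ((\<Omega> ^^ (k - degree p)) w)"
      have \<Omega>_pow_x: "(\<Omega> ^^ j) x = polyH h ((\<Omega> ^^ (j + (k - degree p))) w)" for j
        by (simp add: x_def polyH_\<Omega>_pow funpow_add)
      have "0 = poly\<Omega> p x"
        using annihilates by simp
      also have "\<dots> = (\<Sum>j<Suc (degree p). sc (coeff p j) ((\<Omega> ^^ j) x))"
        by (simp add: poly_op_def lessThan_Suc_atMost)
      also have "\<dots> = (\<Sum>j<degree p. sc (coeff p j) (polyH h ((\<Omega> ^^ (j + (k - degree p))) w)))
          + polyH h ((\<Omega> ^^ k) w)"
        using False monic by (simp add: \<Omega>_pow_x)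
      finally have eq: "polyH h ((\<Omega> ^^ k) w)
          = - (\<Sum>j<degree p. sc (coeff p j) (polyH h ((\<Omega> ^^ (j + (k - degree p))) w)))"
        by (simp add: eq_neg_iff_add_eq_0 add.commute)
      have "(\<Sum>j<degree p. sc (coeff p j) (polyH h ((\<Omega> ^^ (j + (k - degree p))) w))) \<in> omega_span (degree p)"
        by (intro subspace_sum[OF subspace_omega_span] subspace_scale[OF subspace_omega_span] less)
          (use False in auto)
      then show ?thesis
        unfolding eq by (rule subspace_neg[OF subspace_omega_span])
    qed
  qed
qed

text \<open>\<open>E/c - 1\<close> acts on \<open>g(H) \<Omega>\<^sup>k w\<close> as the difference operator \<open>g(X) \<mapsto> g(X - 1) - g(X)\<close>.\<close>
lemma relation_shift_diff:
  assumes "(\<Sum>k<K. polyH (G k) ((\<Omega> ^^ k) w)) = 0"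
  shows "(\<Sum>k<K. polyH (pcompose (G k) [:-1, 1:] - G k) ((\<Omega> ^^ k) w)) = 0"
proof -
  have "polyH (pcompose (G k) [:-1, 1:] - G k) ((\<Omega> ^^ k) w)
      = sc (inverse c) (E (polyH (G k) ((\<Omega> ^^ k) w))) - polyH (G k) ((\<Omega> ^^ k) w)" for k
    using c_nonzero by (simp add: poly_op_diff E_polyH E_\<Omega>_pow_w linear_scale[OF linear_polyH])
  then have "(\<Sum>k<K. polyH (pcompose (G k) [:-1, 1:] - G k) ((\<Omega> ^^ k) w))
      = sc (inverse c) (E (\<Sum>k<K. polyH (G k) ((\<Omega> ^^ k) w))) - (\<Sum>k<K. polyH (G k) ((\<Omega> ^^ k) w))"
    by (simp add: linear_sum[OF linear_E] scale_sum_right sum_subtractf)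
  with assms show ?thesis
    by (simp add: linear_0[OF linear_E])
qed

lemma annihilator_of_constant_relation:
  assumes const: "\<forall>k<K. degree (G k) = 0" and rel: "(\<Sum>k<K. polyH (G k) ((\<Omega> ^^ k) w)) = 0"
    and "k0 < K" "G k0 \<noteq> 0"
  shows "\<exists>q. q \<noteq> 0 \<and> degree q < K \<and> poly\<Omega> q w = 0"
proof -
  define a where "a k = coeff (G k) 0" for k
  define q where "q = (\<Sum>k<K. monom (a k) k)"
  have coeff_q: "coeff q j = (if j < K then a j else 0)" for j
    by (simp add: q_def coeff_sum)
  have G_const: "G k = [:a k:]" if "k < K" for k
    unfolding a_def using const that by (intro degree_0_id[symmetric]) simp
  have "q \<noteq> 0"
    using coeff_q[of k0] G_const[of k0] \<open>k0 < K\<close> \<open>G k0 \<noteq> 0\<close> by auto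
  moreover have "degree q < K"
    using \<open>k0 < K\<close> by (intro le_less_trans[OF degree_le[of "K - 1"]]) (auto simp: coeff_q)
  moreover have "poly\<Omega> q w = (\<Sum>k<K. polyH (G k) ((\<Omega> ^^ k) w))"
    unfolding q_def poly_op_sum poly_op_monom by (rule sum.cong) (simp_all add: G_const)
  ultimately show ?thesis
    using rel by metis
qed

lemma annihilator_of_relation:
  assumes rel: "(\<Sum>k<K. polyH (G k) ((\<Omega> ^^ k) w)) = 0" and "k0 < K" "G k0 \<noteq> 0"
  shows "\<exists>q. q \<noteq> 0 \<and> degree q < K \<and> poly\<Omega> q w = 0"
proof -
  have "\<exists>q. q \<noteq> 0 \<and> degree q < K \<and> poly\<Omega> q w = 0"
    if "\<forall>k<K. degree (G k) \<le> d" "(\<Sum>k<K. polyH (G k) ((\<Omega> ^^ k) w)) = 0" "k0 < K" "G k0 \<noteq> 0"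
    for d G k0
    using that
  proof (induct d arbitrary: G k0)
    case 0
    then show ?case
      by (intro annihilator_of_constant_relation[of K G k0]) auto
  next
    case (Suc d)
    show ?case
    proof (cases "\<forall>k<K. degree (G k) = 0")
      case True
      then show ?thesis
        using Suc.prems by (intro annihilator_of_constant_relation[of K G k0]) auto
    next
      case False
      then obtain k1 where "k1 < K" "0 < degree (G k1)"
        by auto
      show ?thesis
      proof (rule Suc.hyps)
        show "\<forall>k<K. degree (pcompose (G k) [:-1, 1:] - G k) \<le> d"
          using Suc.prems(1) by (simp add: degree_pcompose_shift_diff_le)
        show "(\<Sum>k<K. polyH (pcompose (G k) [:-1, 1:] - G k) ((\<Omega> ^^ k) w)) = 0"
          by (rule relation_shift_diff[OF Suc.prems(2)])
        show "pcompose (G k1) [:-1, 1:] - G k1 \<noteq> 0"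
          by (rule pcompose_shift_diff_nonzero) fact
      qed fact
    qed
  qed
  moreover have "\<forall>k<K. degree (G k) \<le> (\<Sum>j<K. degree (G j))"
    by (intro allI impI member_le_sum) auto
  ultimately show ?thesis
    using assms by blast
qed

lemma F_pow_polyH_w_independent:
  assumes "\<And>q. q \<noteq> 0 \<Longrightarrow> poly\<Omega> q w = 0 \<Longrightarrow> M \<le> degree q"
    and "(\<Sum>i<M. (F ^^ i) (polyH (g i) w)) = 0"
  shows "\<forall>i<M. g i = 0"
  using assms
proof (induct M arbitrary: g)
  case (Suc M)
  have linear_F_pow: "Vector_Spaces.linear sc sc (F ^^ M)"
    by (rule linear_funpow[OF linear_F])
  have sum_eq_0: "(\<Sum>i<M. (F ^^ i) (polyH (g i) w)) + (F ^^ M) (polyH (g M) w) = 0"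
    using Suc.prems(2) by simp
  show ?case
  proof (cases "g M = 0")
    case True
    have "\<forall>i<M. g i = 0"
    proof (rule Suc.hyps)
      show "M \<le> degree q" if "q \<noteq> 0" "poly\<Omega> q w = 0" for q
        using Suc.prems(1)[OF that] by simp
      show "(\<Sum>i<M. (F ^^ i) (polyH (g i) w)) = 0"
        using sum_eq_0 True by (simp add: linear_0[OF linear_F_pow])
    qed
    then show ?thesis
      using True less_Suc_eq by auto
  next
    case False
    define a where "a = inverse ((2 * c) ^ M)"
    define g' where "g' = pcompose (g M) [:of_nat M, 1:]"
    define t where "t = (F ^^ M) (polyH (g M) w) - sc a (polyH g' ((\<Omega> ^^ M) w))"
    have "t \<in> omega_span M"
      using F_pow_polyH_w_leading[of M "g M"] by (simp add: t_def a_def g'_def)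
    moreover have "(\<Sum>i<M. (F ^^ i) (polyH (g i) w)) \<in> omega_span M"
      using F_pow_polyH_w_mem_omega_span omega_span_mono
      by (intro subspace_sum[OF subspace_omega_span]) (meson lessThan_iff less_eq_Suc_le subsetD)
    ultimately have "(\<Sum>i<M. (F ^^ i) (polyH (g i) w)) + t \<in> omega_span M"
      by (rule subspace_add[OF subspace_omega_span, rotated])
    then obtain G where G: "(\<Sum>i<M. (F ^^ i) (polyH (g i) w)) + t = (\<Sum>k<M. polyH (G k) ((\<Omega> ^^ k) w))"
      unfolding omega_span_def by blast
    have "(\<Sum>k<Suc M. polyH ((G(M := smult a g')) k) ((\<Omega> ^^ k) w))
        = (\<Sum>i<M. (F ^^ i) (polyH (g i) w)) + t + sc a (polyH g' ((\<Omega> ^^ M) w))"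
      by (simp add: G poly_op_smult)
    also have "\<dots> = 0"
      using sum_eq_0 by (simp add: t_def)
    finally have relation: "(\<Sum>k<Suc M. polyH ((G(M := smult a g')) k) ((\<Omega> ^^ k) w)) = 0" .
    have "g' \<noteq> 0"
      using False pcompose_eq_0[of "g M" "[:of_nat M, 1:]"] by (auto simp: g'_def)
    moreover have "a \<noteq> 0"
      using c_nonzero by (simp add: a_def)
    ultimately obtain q where "q \<noteq> 0" "degree q < Suc M" "poly\<Omega> q w = 0"
      using annihilator_of_relation[OF relation, of M] by auto
    with Suc.prems(1) show ?thesis
      by fastforce
  qed
qed simp

lemma FH_vector_relation_trivial:
  assumes J: "finite J" "J \<subseteq> {..<M} \<times> UNIV"
    and no_annihilator: "\<And>q. q \<noteq> 0 \<Longrightarrow> poly\<Omega> q w = 0 \<Longrightarrow> M \<le> degree q"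
    and relation: "(\<Sum>x\<in>J. sc (a x) (FH_vector x)) = 0"
  shows "\<forall>x\<in>J. a x = 0"
proof -
  obtain N where "snd ` J \<subseteq> {..<N}"
    using finite_nat_bounded[of "snd ` J"] J(1) by auto
  with J(2) have J_subset: "J \<subseteq> {..<M} \<times> {..<N}"
    by force
  define A where "A i j = (if (i, j) \<in> J then a (i, j) else 0)" for i j
  define g where "g i = (\<Sum>j<N. monom (A i j) j)" for i
  have "(\<Sum>x\<in>J. sc (a x) (FH_vector x)) = (\<Sum>x\<in>{..<M} \<times> {..<N}. sc (A (fst x) (snd x)) (FH_vector x))"
    by (rule sum.mono_neutral_cong_left) (use J_subset in \<open>auto simp: A_def\<close>)
  also have "\<dots> = (\<Sum>i<M. \<Sum>j<N. sc (A i j) (FH_vector (i, j)))"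
    by (simp add: sum.cartesian_product split_beta)
  also have "\<dots> = (\<Sum>i<M. (F ^^ i) (polyH (g i) w))"
  proof (rule sum.cong)
    fix i
    have "Vector_Spaces.linear sc sc (F ^^ i)"
      by (rule linear_funpow[OF linear_F])
    then show "(\<Sum>j<N. sc (A i j) (FH_vector (i, j))) = (F ^^ i) (polyH (g i) w)"
      by (simp add: g_def poly_op_sum poly_op_monom linear_sum linear_scale FH_vector_def)
  qed simp
  finally have g_eq_0: "\<forall>i<M. g i = 0"
    using relation by (intro F_pow_polyH_w_independent[OF no_annihilator]) simp_all
  show ?thesis
  proof
    fix x assume "x \<in> J"
    then obtain i j where ij: "x = (i, j)" "i < M" "j < N"
      using J_subset by blast
    then have "A i j = coeff (g i) j"
      by (simp add: g_def coeff_sum)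
    with ij g_eq_0 \<open>x \<in> J\<close> show "a x = 0"
      by (simp add: A_def)
  qed
qed

lemma is_basis_family_if_Z_V_principal:
  assumes monic: "lead_coeff p = 1" and Z_V_eq: "Z_V sc u E F H = {p * r | r. True}"
  shows "is_basis_family sc FH_vector ({..<degree p} \<times> UNIV)"
proof -
  have "p * 1 \<in> Z_V sc u E F H"
    unfolding Z_V_eq by blast
  then have "poly\<Omega> p v = 0" for v
    by (simp add: Z_V_def)
  then have "omega_span m \<subseteq> span (FH_vector ` ({..<degree p} \<times> UNIV))" for m
    using omega_span_subset_if_annihilated[OF monic] omega_span_subset_span_FH_vector by blast
  then have "span (FH_vector ` ({..<degree p} \<times> UNIV)) = UNIV"
    using UN_omega_span_eq_UNIV by blast
  moreover have "degree p \<le> degree q" if "q \<noteq> 0" and q_w: "poly\<Omega> q w = 0" for q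
  proof -
    obtain r where "q = p * r"
      using q_w Z_V_iff[of q] unfolding Z_V_eq by blast
    with \<open>q \<noteq> 0\<close> show ?thesis
      by (auto simp: degree_mult_eq)
  qed
  then have "inj_on FH_vector ({..<degree p} \<times> UNIV) \<and> independent (FH_vector ` ({..<degree p} \<times> UNIV))"
    by (intro inj_on_independent_imageI FH_vector_relation_trivial) auto
  ultimately show ?thesis
    by (simp add: is_basis_family_def)
qed

lemma is_basis_family_if_Z_V_zero:
  assumes Z_V_eq: "Z_V sc u E F H = {0}"
  shows "is_basis_family sc FH_vector UNIV"
proof -
  have "span (FH_vector ` ({..<m} \<times> UNIV)) \<subseteq> span (range FH_vector)" for m
    by (intro span_mono) auto
  then have "span (range FH_vector) = UNIV"
    using UN_omega_span_eq_UNIV omega_span_subset_span_FH_vector by blast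
  moreover have "inj_on FH_vector UNIV \<and> independent (range FH_vector)"
  proof (rule inj_on_independent_imageI)
    fix J and a :: "nat \<times> nat \<Rightarrow> complex"
    assume "finite J" and relation: "(\<Sum>x\<in>J. sc (a x) (FH_vector x)) = 0"
    then obtain M where "fst ` J \<subseteq> {..<M}"
      using finite_nat_bounded[of "fst ` J"] by auto
    then have "J \<subseteq> {..<M} \<times> UNIV"
      by force
    moreover have "q = 0" if "poly\<Omega> q w = 0" for q
      using that Z_V_iff[of q] Z_V_eq by blast
    ultimately show "\<forall>x\<in>J. a x = 0"
      using FH_vector_relation_trivial[OF \<open>finite J\<close> _ _ relation] by blast
  qed
  ultimately show ?thesis
    by (simp add: is_basis_family_def)
qed

end

theorem mainTheorem14:
  fixes sc :: "complex \<Rightarrow> 'v::ab_group_add \<Rightarrow> 'v"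
    and f u :: "complex poly"
    and E F H :: "'v \<Rightarrow> 'v"
    and c :: complex and w :: 'v
  assumes hu: "f = smult (1/2) (pcompose u [:1, 1:] - u)"
    and hc: "c \<noteq> 0"
    and hV: "whittaker_module sc f E F H c w"
  shows "(\<forall>p n. p \<noteq> 0 \<and> lead_coeff p = 1 \<and> degree p = n \<and> Z_V sc u E F H = {p * r | r. True} \<longrightarrow>
            is_basis_family sc (\<lambda>(i, j). (F ^^ i) ((H ^^ j) w)) ({..<n} \<times> UNIV))
       \<and> (Z_V sc u E F H = {0} \<longrightarrow>
            is_basis_family sc (\<lambda>(i, j). (F ^^ i) ((H ^^ j) w)) (UNIV :: (nat \<times> nat) set))"
proof -
  interpret whittaker sc f u E F H c w
    using assms by unfold_locales
  show ?thesis
    using is_basis_family_if_Z_V_principal is_basis_family_if_Z_V_zero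
    unfolding FH_vector_def by blast
qed

end
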